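(* Let $G=(V,E,L)$ be a hypergraph with loops. Then the set of extreme points of $\mathrm{PP}(G)$ is $$\mathcal{Q}=\Big\{z\in\mathbb{R}^{V\cup E\cup L}: z_i\in[0,1]\ \forall i\in V \text{ with }\{i,i\}\in L^+,\ z_i\in\{0,1\}\ \forall i\in V\text{ with }\{i,i\}\notin L^+,\ z_e=\prod_{k\in e}z_k\ \forall e\in E,\ z_{ii}=z_i^2\ \forall\{i,i\}\in L\Big\}.$$
   Context: A hypergraph with loops is $G=(V,E,L)$: $V$ a finite node set, $E$ a set of subsets of $V$ of cardinality at least two, $L$ a set of loops $\{i,i\}$, $i\in V$, partitioned as $L=L^-\cup L^+$ (minus/plus loops). $\mathrm{PP}(G):=\mathrm{conv}\{z\in\mathbb{R}^{V\cup E\cup L}: z_{ii}\ge z_i^2\ \forall\{i,i\}\in L^+,\ z_{ii}\le z_i^2\ \forall \{i,i\}\in L^-,\ z_e=\prod_{i\in e}z_i\ \forall e\in E,\ z_i\in[0,1]\ \forall i\in V\}$. *)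

theory Defs
  imports "HOL-Analysis.Analysis"
begin

text \<open>Coordinate index set for R^(V \<union> E \<union> L): nodes i, hyperedges e, loops {i,i}
  (a loop {i,i} is identified by its node i).\<close>
datatype 'v idx = Node 'v | Edge "'v set" | Loop 'v

instance idx :: (finite) finite
proof
  have "(UNIV :: 'a idx set) = range Node \<union> range Edge \<union> range Loop"
    by (auto, metis idx.exhaust rangeI)
  then show "finite (UNIV :: 'a idx set)" by (metis finite_Un finite_imageI finite)
qed

text \<open>Hypergraph with loops G = (V, E, L), L = Lminus \<union> Lplus (disjoint).\<close>
definition hypergraph_loops :: "'v set \<Rightarrow> 'v set set \<Rightarrow> 'v set \<Rightarrow> 'v set \<Rightarrow> bool" where
  "hypergraph_loops V E Lm Lp \<longleftrightarrow> finite V \<and> (\<forall>e\<in>E. e \<subseteq> V \<and> card e \<ge> 2)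
     \<and> Lm \<subseteq> V \<and> Lp \<subseteq> V \<and> Lm \<inter> Lp = {}"

definition supported :: "'v set \<Rightarrow> 'v set set \<Rightarrow> 'v set \<Rightarrow> 'v set \<Rightarrow> real ^ ('v::finite) idx \<Rightarrow> bool" where
  "supported V E Lm Lp z \<longleftrightarrow>
     (\<forall>i. i \<notin> V \<longrightarrow> z $ Node i = 0) \<and> (\<forall>e. e \<notin> E \<longrightarrow> z $ Edge e = 0)
     \<and> (\<forall>i. i \<notin> Lm \<union> Lp \<longrightarrow> z $ Loop i = 0)"

definition PP_set :: "'v set \<Rightarrow> 'v set set \<Rightarrow> 'v set \<Rightarrow> 'v set \<Rightarrow> (real ^ ('v::finite) idx) set" where
  "PP_set V E Lm Lp = {z. supported V E Lm Lp z
      \<and> (\<forall>i\<in>Lp. z $ Loop i \<ge> (z $ Node i)^2)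
      \<and> (\<forall>i\<in>Lm. z $ Loop i \<le> (z $ Node i)^2)
      \<and> (\<forall>e\<in>E. z $ Edge e = (\<Prod>k\<in>e. z $ Node k))
      \<and> (\<forall>i\<in>V. 0 \<le> z $ Node i \<and> z $ Node i \<le> 1)}"

definition PP :: "'v set \<Rightarrow> 'v set set \<Rightarrow> 'v set \<Rightarrow> 'v set \<Rightarrow> (real ^ ('v::finite) idx) set" where
  "PP V E Lm Lp = convex hull (PP_set V E Lm Lp)"

definition Q_set :: "'v set \<Rightarrow> 'v set set \<Rightarrow> 'v set \<Rightarrow> 'v set \<Rightarrow> (real ^ ('v::finite) idx) set" where
  "Q_set V E Lm Lp = {z. supported V E Lm Lp z
      \<and> (\<forall>i\<in>V. i \<in> Lp \<longrightarrow> 0 \<le> z $ Node i \<and> z $ Node i \<le> 1)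
      \<and> (\<forall>i\<in>V. i \<notin> Lp \<longrightarrow> z $ Node i \<in> {0, 1})
      \<and> (\<forall>e\<in>E. z $ Edge e = (\<Prod>k\<in>e. z $ Node k))
      \<and> (\<forall>i\<in>Lm \<union> Lp. z $ Loop i = (z $ Node i)^2)}"

end

theory Submission
  imports Defs
begin

text \<open>
  A point \<open>z\<close> of \<open>Q_set\<close> is exposed: on each node \<open>i\<close> some linear function of
  \<open>(x\<^sub>i, x\<^sub>i\<^sub>i)\<close> is minimised over \<open>PP_set\<close> exactly at
  \<open>(z\<^sub>i, z\<^sub>i\<^sub>i)\<close>, so their sum is a linear functional whose unique minimiser
  over \<open>PP_set\<close> is \<open>z\<close>.  Conversely, an extreme point \<open>z\<close> lies in \<open>PP_set\<close>, and
  it is a proper convex combination of two points of \<open>PP_set\<close> if some loop value differs from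
  \<open>z\<^sub>i\<^sup>2\<close> (move the loop coordinate alone) or if a node without plus loop has
  \<open>0 < z\<^sub>i < 1\<close> (interpolate between \<open>z\<^sub>i = 0\<close> and \<open>z\<^sub>i = 1\<close>, which
  is possible because every monomial \<open>z\<^sub>e\<close> is affine in \<open>z\<^sub>i\<close>).
\<close>

lemma extreme_point_of_convex_hull_strict_minimizer:
  fixes f :: "'a::real_vector \<Rightarrow> real"
  assumes "linear f" and "z \<in> S" and less: "\<And>x. x \<in> S \<Longrightarrow> x \<noteq> z \<Longrightarrow> f z < f x"
  shows "z extreme_point_of convex hull S"
proof -
  let ?H = "{x. f z < f x}"
  have "convex ?H"
    using convex_linear_vimage[OF \<open>linear f\<close> convex_real_interval(3)[of "f z"]] by (simp add: vimage_def)
  then have hull_H: "convex hull (S - {z}) \<subseteq> ?H"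
    using less by (intro hull_minimal) auto
  have "convex hull S \<subseteq> insert z ?H"
  proof
    fix y assume "y \<in> convex hull S"
    then have "y \<in> convex hull (insert z (S - {z}))"
      using \<open>z \<in> S\<close> by (simp add: insert_absorb)
    show "y \<in> insert z ?H"
    proof (cases "S - {z} = {}")
      case True
      then show ?thesis
        using \<open>y \<in> convex hull (insert z (S - {z}))\<close> by (simp only: True convex_hull_singleton) simp
    next
      case False
      then obtain u x where u: "0 \<le> u" and x: "x \<in> convex hull (S - {z})"
        and y: "y = (1 - u) *\<^sub>R z + u *\<^sub>R x"
        using \<open>y \<in> convex hull (insert z (S - {z}))\<close> unfolding convex_hull_insert_alt by auto
      have "f z < f x" using hull_H x by blast
      then have "u = 0 \<or> f z < (1 - u) * f z + u * f x"
        using u by (auto simp: algebra_simps less_eq_real_def intro: mult_strict_left_mono)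
      then show ?thesis
        using y linear_add[OF \<open>linear f\<close>] linear_scale[OF \<open>linear f\<close>] by auto
    qed
  qed
  then have "convex hull S - {z} = convex hull S \<inter> ?H" by auto
  then have "convex (convex hull S - {z})" using \<open>convex ?H\<close> by (simp add: convex_Int)
  then show ?thesis
    using \<open>z \<in> S\<close> by (simp add: extreme_point_of_stillconvex hull_inc)
qed

lemma Q_set_subset_PP_set: "Q_set V E Lm Lp \<subseteq> PP_set V E Lm Lp"
  by (force simp: Q_set_def PP_set_def)

lemma PP_set_eqI:
  assumes G: "hypergraph_loops V E Lm Lp" and x: "x \<in> PP_set V E Lm Lp" and y: "y \<in> PP_set V E Lm Lp"
    and nodes: "\<And>i. i \<in> V \<Longrightarrow> x $ Node i = y $ Node i"
    and loops: "\<And>i. i \<in> Lm \<union> Lp \<Longrightarrow> x $ Loop i = y $ Loop i"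
  shows "x = y"
proof (rule vec_eq_iff[THEN iffD2], intro allI)
  have sup: "supported V E Lm Lp x" "supported V E Lm Lp y"
    using x y by (simp_all add: PP_set_def)
  fix k show "x $ k = y $ k"
  proof (cases k)
    case (Node i)
    then show ?thesis using sup nodes by (cases "i \<in> V") (simp_all add: supported_def)
  next
    case (Edge e)
    show ?thesis
    proof (cases "e \<in> E")
      case True
      then have "e \<subseteq> V" using G by (simp add: hypergraph_loops_def)
      then have "(\<Prod>k\<in>e. x $ Node k) = (\<Prod>k\<in>e. y $ Node k)"
        using nodes by (intro prod.cong) auto
      then show ?thesis using Edge True x y by (simp add: PP_set_def)
    qed (use Edge sup in \<open>simp add: supported_def\<close>)
  next
    case (Loop i)
    then show ?thesis using sup loops by (cases "i \<in> Lm \<union> Lp") (simp_all add: supported_def)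
  qed
qed

text \<open>
  With a plus loop, \<open>node_cost x - node_cost z = (x\<^sub>i - z\<^sub>i)\<^sup>2 + (x\<^sub>i\<^sub>i - x\<^sub>i\<^sup>2)\<close>;
  otherwise \<open>z\<^sub>i\<close> is \<open>0\<close> or \<open>1\<close> and the cost grows as \<open>x\<^sub>i\<close> leaves it,
  a minus loop contributing \<open>-x\<^sub>i\<^sub>i \<ge> -x\<^sub>i\<^sup>2\<close>.
\<close>
definition node_cost :: "'v set \<Rightarrow> 'v set \<Rightarrow> real ^ 'v idx \<Rightarrow> 'v \<Rightarrow> real ^ ('v::finite) idx \<Rightarrow> real" where
  "node_cost Lm Lp z i x =
     (if i \<in> Lp then x $ Loop i - 2 * z $ Node i * x $ Node i
      else if i \<in> Lm then
        (if z $ Node i = 0 then 2 * x $ Node i - x $ Loop i else - x $ Node i - x $ Loop i)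
      else if z $ Node i = 0 then x $ Node i else - x $ Node i)"

lemma linear_node_cost: "linear (node_cost Lm Lp z i)"
  by (rule linearI) (simp_all add: node_cost_def algebra_simps)

lemma node_cost_minimal:
  assumes "Lm \<inter> Lp = {}" and z: "z \<in> Q_set V E Lm Lp" and x: "x \<in> PP_set V E Lm Lp" and "i \<in> V"
  shows "node_cost Lm Lp z i z \<le> node_cost Lm Lp z i x"
    and "node_cost Lm Lp z i x = node_cost Lm Lp z i z \<Longrightarrow>
           x $ Node i = z $ Node i \<and> (i \<in> Lm \<union> Lp \<longrightarrow> x $ Loop i = z $ Loop i)"
proof -
  define a b c where "a = x $ Node i" and "b = x $ Loop i" and "c = z $ Node i"
  have a: "0 \<le> a" "a \<le> 1" using x \<open>i \<in> V\<close> by (auto simp: PP_set_def a_def)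
  consider (plus) "i \<in> Lp" "a\<^sup>2 \<le> b" "z $ Loop i = c\<^sup>2"
    | (minus) "i \<in> Lm" "i \<notin> Lp" "b \<le> a\<^sup>2" "z $ Loop i = c\<^sup>2" "c = 0 \<or> c = 1"
    | (none) "i \<notin> Lm" "i \<notin> Lp" "c = 0 \<or> c = 1"
    using assms by (auto simp: PP_set_def Q_set_def a_def b_def c_def)
  then have "node_cost Lm Lp z i z \<le> node_cost Lm Lp z i x \<and>
      (node_cost Lm Lp z i x = node_cost Lm Lp z i z \<longrightarrow> a = c \<and> (i \<in> Lm \<union> Lp \<longrightarrow> b = z $ Loop i))"
  proof cases
    case plus
    have gap: "(b - 2 * c * a) - (c\<^sup>2 - 2 * c * c) = (a - c)\<^sup>2 + (b - a\<^sup>2)"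
      by (simp add: power2_eq_square algebra_simps)
    have "a = c \<and> b = c\<^sup>2" if "(a - c)\<^sup>2 + (b - a\<^sup>2) = 0"
      using that plus(2) by (smt (verit) zero_le_power2 power_eq_0_iff right_minus_eq)
    then show ?thesis
      using plus gap
      by (simp add: node_cost_def flip: a_def b_def c_def) (use zero_le_power2[of "a - c"] in linarith)
  next
    case minus
    have "a\<^sup>2 \<le> a" using a by (simp add: power2_eq_square mult_left_le)
    then show ?thesis
      using minus a by (simp add: node_cost_def flip: a_def b_def c_def) (auto simp: power2_eq_square)
  next
    case none
    then show ?thesis using a by (auto simp: node_cost_def simp flip: a_def b_def c_def)
  qed
  then show "node_cost Lm Lp z i z \<le> node_cost Lm Lp z i x"
    and "node_cost Lm Lp z i x = node_cost Lm Lp z i z \<Longrightarrow>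
           x $ Node i = z $ Node i \<and> (i \<in> Lm \<union> Lp \<longrightarrow> x $ Loop i = z $ Loop i)"
    by (auto simp: a_def b_def c_def)
qed

lemma Q_set_imp_extreme_point:
  assumes G: "hypergraph_loops V E Lm Lp" and z: "z \<in> Q_set V E Lm Lp"
  shows "z extreme_point_of PP V E Lm Lp"
  unfolding PP_def
proof (rule extreme_point_of_convex_hull_strict_minimizer)
  have disj: "Lm \<inter> Lp = {}" and "finite V" using G by (auto simp: hypergraph_loops_def)
  show "linear (\<lambda>x. \<Sum>i\<in>V. node_cost Lm Lp z i x)"
    by (rule linear_compose_sum) (simp add: linear_node_cost)
  show "z \<in> PP_set V E Lm Lp" using z Q_set_subset_PP_set by blast
  fix x assume x: "x \<in> PP_set V E Lm Lp" and "x \<noteq> z"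
  show "(\<Sum>i\<in>V. node_cost Lm Lp z i z) < (\<Sum>i\<in>V. node_cost Lm Lp z i x)"
  proof (rule sum_strict_mono_ex1[OF \<open>finite V\<close>])
    show "\<forall>i\<in>V. node_cost Lm Lp z i z \<le> node_cost Lm Lp z i x"
      using node_cost_minimal(1)[OF disj z x] by blast
    show "\<exists>i\<in>V. node_cost Lm Lp z i z < node_cost Lm Lp z i x"
    proof (rule ccontr)
      assume "\<not> ?thesis"
      then have "node_cost Lm Lp z i x = node_cost Lm Lp z i z" if "i \<in> V" for i
        using node_cost_minimal(1)[OF disj z x that] that by force
      then have "x = z"
        using node_cost_minimal(2)[OF disj z x] G
        by (intro PP_set_eqI[OF G x \<open>z \<in> PP_set V E Lm Lp\<close>]) (auto simp: hypergraph_loops_def)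
      with \<open>x \<noteq> z\<close> show False ..
    qed
  qed
qed

lemma extreme_point_of_convex_hull_segmentD:
  assumes "z extreme_point_of convex hull S" and "a \<in> S" and "b \<in> S"
    and "0 < u" and "u < 1" and "(1 - u) *\<^sub>R a + u *\<^sub>R b = z"
  shows "a = b"
proof (rule ccontr)
  assume "a \<noteq> b"
  then have "z \<in> open_segment a b" using assms(4-6) by (auto simp: in_segment)
  with assms(1-3) show False by (auto simp: extreme_point_of_def hull_inc)
qed

definition assign_node :: "'v set set \<Rightarrow> 'v \<Rightarrow> real \<Rightarrow> real \<Rightarrow> real ^ 'v idx \<Rightarrow> real ^ ('v::finite) idx" where
  "assign_node E i s l z = (\<chi> k. case k of
       Node j \<Rightarrow> if j = i then s else z $ Node j
     | Edge e \<Rightarrow> if e \<in> E \<and> i \<in> e then s * (\<Prod>k\<in>e - {i}. z $ Node k) else z $ Edge e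
     | Loop j \<Rightarrow> if j = i then l else z $ Loop j)"

lemma assign_node_nth [simp]:
  "assign_node E i s l z $ Node j = (if j = i then s else z $ Node j)"
  "assign_node E i s l z $ Edge e = (if e \<in> E \<and> i \<in> e then s * (\<Prod>k\<in>e - {i}. z $ Node k) else z $ Edge e)"
  "assign_node E i s l z $ Loop j = (if j = i then l else z $ Loop j)"
  by (simp_all add: assign_node_def)

lemma assign_node_affine:
  "(1 - u) *\<^sub>R assign_node E i s l z + u *\<^sub>R assign_node E i s' l' z
     = assign_node E i ((1 - u) * s + u * s') ((1 - u) * l + u * l') z"
proof (rule vec_eq_iff[THEN iffD2], intro allI)
  fix k show "((1 - u) *\<^sub>R assign_node E i s l z + u *\<^sub>R assign_node E i s' l' z) $ k
      = assign_node E i ((1 - u) * s + u * s') ((1 - u) * l + u * l') z $ k"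
    by (cases k) (simp_all add: algebra_simps)
qed

lemma prod_Node_assign_node:
  assumes "finite e" and "i \<in> e"
  shows "(\<Prod>k\<in>e. assign_node E i s l z $ Node k) = s * (\<Prod>k\<in>e - {i}. z $ Node k)"
  using prod.remove[OF assms, of "\<lambda>k. assign_node E i s l z $ Node k"] by simp

lemma assign_node_self:
  assumes "hypergraph_loops V E Lm Lp" and "z \<in> PP_set V E Lm Lp"
  shows "assign_node E i (z $ Node i) (z $ Loop i) z = z"
proof (rule vec_eq_iff[THEN iffD2], intro allI)
  fix k show "assign_node E i (z $ Node i) (z $ Loop i) z $ k = z $ k"
  proof (cases k)
    case (Edge e)
    have "finite e" if "e \<in> E"
      using that assms(1) card.infinite by (force simp: hypergraph_loops_def)
    then show ?thesis
      using Edge assms(2) prod.remove[of e i "\<lambda>k. z $ Node k"] by (auto simp: PP_set_def)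
  qed simp_all
qed

lemma assign_node_in_PP_set:
  assumes G: "hypergraph_loops V E Lm Lp" and z: "z \<in> PP_set V E Lm Lp" and "i \<in> V"
    and s: "0 \<le> s" "s \<le> 1"
    and plus: "i \<in> Lp \<Longrightarrow> s\<^sup>2 \<le> l" and minus: "i \<in> Lm \<Longrightarrow> l \<le> s\<^sup>2"
    and no_loop: "i \<notin> Lm \<union> Lp \<Longrightarrow> l = 0"
  shows "assign_node E i s l z \<in> PP_set V E Lm Lp"
  unfolding PP_set_def mem_Collect_eq
proof (intro conjI ballI)
  show "supported V E Lm Lp (assign_node E i s l z)"
    using z \<open>i \<in> V\<close> no_loop by (auto simp: PP_set_def supported_def)
  show "(assign_node E i s l z $ Node j)\<^sup>2 \<le> assign_node E i s l z $ Loop j" if "j \<in> Lp" for j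
    using that z plus by (auto simp: PP_set_def)
  show "assign_node E i s l z $ Loop j \<le> (assign_node E i s l z $ Node j)\<^sup>2" if "j \<in> Lm" for j
    using that z minus by (auto simp: PP_set_def)
  show "0 \<le> assign_node E i s l z $ Node j" "assign_node E i s l z $ Node j \<le> 1" if "j \<in> V" for j
    using that z s by (auto simp: PP_set_def)
  show "assign_node E i s l z $ Edge e = (\<Prod>k\<in>e. assign_node E i s l z $ Node k)" if "e \<in> E" for e
  proof (cases "i \<in> e")
    case True
    have "finite e" using \<open>e \<in> E\<close> G card.infinite by (force simp: hypergraph_loops_def)
    then show ?thesis
      using prod_Node_assign_node[OF _ True, of E s l z] True \<open>e \<in> E\<close> by simp
  next
    case False
    then have "(\<Prod>k\<in>e. assign_node E i s l z $ Node k) = (\<Prod>k\<in>e. z $ Node k)"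
      by (intro prod.cong) auto
    with False \<open>e \<in> E\<close> z show ?thesis by (simp add: PP_set_def)
  qed
qed

lemma extreme_point_Loop_eq:
  assumes G: "hypergraph_loops V E Lm Lp" and ext: "z extreme_point_of PP V E Lm Lp"
    and i: "i \<in> Lm \<union> Lp"
  shows "z $ Loop i = (z $ Node i)\<^sup>2"
proof -
  have z: "z \<in> PP_set V E Lm Lp"
    using ext unfolding PP_def by (rule extreme_point_of_convex_hull)
  have "i \<in> V" and disj: "Lm \<inter> Lp = {}" using G i by (auto simp: hypergraph_loops_def)
  define c d where "c = z $ Node i" and "d = z $ Loop i"
  have c: "0 \<le> c" "c \<le> 1" using z \<open>i \<in> V\<close> by (auto simp: PP_set_def c_def)
  have d: "i \<in> Lp \<Longrightarrow> c\<^sup>2 \<le> d" "i \<in> Lm \<Longrightarrow> d \<le> c\<^sup>2"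
    using z by (auto simp: PP_set_def c_def d_def)
  let ?a = "assign_node E i c (c\<^sup>2) z" and ?b = "assign_node E i c (2 * d - c\<^sup>2) z"
  have ab: "?a \<in> PP_set V E Lm Lp" "?b \<in> PP_set V E Lm Lp"
    using c d disj i by (auto intro!: assign_node_in_PP_set[OF G z \<open>i \<in> V\<close>])
  have "(1 - 1/2) *\<^sub>R ?a + (1/2) *\<^sub>R ?b = assign_node E i c d z"
    unfolding assign_node_affine by (simp add: field_simps)
  also have "\<dots> = z" unfolding c_def d_def using G z by (rule assign_node_self)
  finally have "?a = ?b"
    using extreme_point_of_convex_hull_segmentD[OF ext[unfolded PP_def] ab, where u = "1/2"] by simp
  then have "?a $ Loop i = ?b $ Loop i" by simp
  then show ?thesis by (simp add: c_def d_def)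
qed

lemma extreme_point_Node_01:
  assumes G: "hypergraph_loops V E Lm Lp" and ext: "z extreme_point_of PP V E Lm Lp"
    and "i \<in> V" and "i \<notin> Lp"
  shows "z $ Node i \<in> {0, 1}"
proof (rule ccontr)
  assume frac: "z $ Node i \<notin> {0, 1}"
  have z: "z \<in> PP_set V E Lm Lp"
    using ext unfolding PP_def by (rule extreme_point_of_convex_hull)
  define t where "t = z $ Node i"
  have t: "0 < t" "t < 1" using z frac \<open>i \<in> V\<close> by (auto simp: PP_set_def t_def less_le)
  define l0 l1 where "l0 = (if i \<in> Lm then (z $ Loop i - t) / (1 - t) else 0)"
    and "l1 = (if i \<in> Lm then 1 else 0 :: real)"
  have "l0 \<le> 0"
  proof (cases "i \<in> Lm")
    case True
    then have "z $ Loop i \<le> t\<^sup>2" using z by (simp add: PP_set_def t_def)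
    also have "t\<^sup>2 \<le> t" using t by (simp add: power2_eq_square mult_left_le_one_le)
    finally show ?thesis using True t by (simp add: l0_def divide_nonpos_pos)
  qed (simp add: l0_def)
  then have ab: "assign_node E i 0 l0 z \<in> PP_set V E Lm Lp" "assign_node E i 1 l1 z \<in> PP_set V E Lm Lp"
    using \<open>i \<notin> Lp\<close> by (auto intro!: assign_node_in_PP_set[OF G z \<open>i \<in> V\<close>] simp: l0_def l1_def)
  have "i \<notin> Lm \<Longrightarrow> z $ Loop i = 0"
    using z \<open>i \<notin> Lp\<close> by (simp add: PP_set_def supported_def)
  then have "(1 - t) * l0 + t * l1 = z $ Loop i"
    using t by (auto simp: l0_def l1_def)
  then have "(1 - t) *\<^sub>R assign_node E i 0 l0 z + t *\<^sub>R assign_node E i 1 l1 z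
      = assign_node E i t (z $ Loop i) z"
    unfolding assign_node_affine by simp
  also have "\<dots> = z" unfolding t_def using G z by (rule assign_node_self)
  finally have "assign_node E i 0 l0 z = assign_node E i 1 l1 z"
    by (rule extreme_point_of_convex_hull_segmentD[OF ext[unfolded PP_def] ab t])
  then have "assign_node E i 0 l0 z $ Node i = assign_node E i 1 l1 z $ Node i" by simp
  then show False by simp
qed

theorem lemma2:
  fixes V :: "'v::finite set" and E :: "'v set set" and Lm Lp :: "'v set"
  assumes "hypergraph_loops V E Lm Lp"
  shows "{z. z extreme_point_of PP V E Lm Lp} = Q_set V E Lm Lp"
proof (intro equalityI subsetI)
  fix z assume "z \<in> {z. z extreme_point_of PP V E Lm Lp}"
  then have ext: "z extreme_point_of PP V E Lm Lp" by simp
  then have "z \<in> PP_set V E Lm Lp"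
    unfolding PP_def by (rule extreme_point_of_convex_hull)
  with extreme_point_Loop_eq[OF assms ext] extreme_point_Node_01[OF assms ext]
  show "z \<in> Q_set V E Lm Lp"
    by (auto simp: PP_set_def Q_set_def)
qed (simp add: Q_set_imp_extreme_point[OF assms])

end
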